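(* Let $\mathcal{G}$ be a $p$-periodic graph on $V$ with arena $\mathcal{D}$, and suppose $\mathcal{G}$ is reflexive and temporally connected. If some augmented arena $\mathcal{A}$ of $\mathcal{D}$ contains a star, then every temporal node of $\mathcal{A}^*$ is an anchored star in $\mathcal{A}^*$, i.e., $\Gamma_t(u,\mathcal{A}^* )=V$ and $(t,u)$ is anchored for all $t\in\mathbb{Z}_p$, $u\in V$.
   Context: Let $V$ be a finite set and $p\ge 1$ an integer; $[t]_p$ denotes $t \bmod p$. A $p$-periodic graph $\mathcal{G}=(G_0,\dots,G_{p-1})^*$ is the infinite sequence of directed graphs $G_t=(V,E_{[t]_p})$, $t=0,1,\dots$, where $E_0,\dots,E_{p-1}\subseteq V\times V$ (self-loops allowed), each $G_i$ sinkless. $\mathcal{G}$ is reflexive if $(u,u)\in E_i$ for all $u\in V$, $i\in\mathbb{Z}_p$. $\mathcal{G}$ is temporally connected if for all $u,v\in V$ and every time $t\ge 0$ there is a journey from $u$ to $v$ starting at time $t$: a sequence $z_0=u,z_1,\dots,z_k=v$ with $(z_j,z_{j+1})\in E_{[t+j]_p}$ for $0\le j<k$. An arena on $V$ of length $p$ is a directed graph with vertex set $\mathbb{Z}_p\times V$ (temporal nodes) all of whose edges have the form $((i,w),([i+1]_p,w'))$. The arena of $\mathcal{G}$ is the arena $\mathcal{D}$ with $((i,u),([i+1]_p,v))\in E(\mathcal{D})$ iff $(u,v)\in E_i$. Write $\Gamma_t(u,\mathcal{M})=\{v : ((t,u),([t+1]_p,v))\in E(\mathcal{M})\}$. Game: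 first the cop, then the robber choose vertices. In each round $t$, with cop at $c$ and robber at $r$, the cop must move to some $c'\in\Gamma_{[t]_p}(c,\mathcal{D})$; if $c'=r$ the cop wins; otherwise the robber must move to some $r'\in\Gamma_{[t]_p}(r,\mathcal{D})$ and the next round starts. A configuration $(t,c,r)$ ($t\in\mathbb{Z}_p$) is the state at the start of a round with index $\equiv t\pmod p$, cop at $c$, robber at $r$, cop to move; it is copwin if from it the cop can force capture in finitely many rounds against every robber strategy. An augmented arena of $\mathcal{D}$ is an arena $\mathcal{A}$ with $E(\mathcal{D})\subseteq E(\mathcal{A})$ such that for every edge $((t,x),([t+1]_p,y))\in E(\mathcal{A})$ the configuration $(t,x,y)$ is copwin. $\mathcal{A}^*$ is the maximum augmented arena (edge set = union of edge sets of all augmented arenas). A temporal node $(t,u)$ is a star in an arena $\mathcal{A}$ if $\Gamma_t(u,\mathcal{A})=V$; it is anchored if there is a directed walk (possibly of length $0$) in $\mathcal{D}$ from some $(0,v)$ to $(t,u)$. *)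

theory Defs
  imports Main
begin

text \<open>A p-periodic graph on V is given by edge sets E 0, ..., E (p-1) (index i < p);
  graph at time t is E (t mod p). Temporal nodes are pairs (i, w) with i < p, w in V.\<close>

definition periodic_graph :: "'v set \<Rightarrow> nat \<Rightarrow> (nat \<Rightarrow> ('v \<times> 'v) set) \<Rightarrow> bool" where
  "periodic_graph V p E \<longleftrightarrow> finite V \<and> p \<ge> 1 \<and>
     (\<forall>i<p. E i \<subseteq> V \<times> V \<and> (\<forall>u\<in>V. \<exists>v. (u, v) \<in> E i))"

definition reflexive_pg :: "'v set \<Rightarrow> nat \<Rightarrow> (nat \<Rightarrow> ('v \<times> 'v) set) \<Rightarrow> bool" where
  "reflexive_pg V p E \<longleftrightarrow> (\<forall>i<p. \<forall>u\<in>V. (u, u) \<in> E i)"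

definition journey :: "nat \<Rightarrow> (nat \<Rightarrow> ('v \<times> 'v) set) \<Rightarrow> nat \<Rightarrow> 'v list \<Rightarrow> bool" where
  "journey p E t zs \<longleftrightarrow> zs \<noteq> [] \<and>
     (\<forall>j. Suc j < length zs \<longrightarrow> (zs ! j, zs ! Suc j) \<in> E ((t + j) mod p))"

definition temporally_connected :: "'v set \<Rightarrow> nat \<Rightarrow> (nat \<Rightarrow> ('v \<times> 'v) set) \<Rightarrow> bool" where
  "temporally_connected V p E \<longleftrightarrow>
     (\<forall>u\<in>V. \<forall>v\<in>V. \<forall>t::nat. \<exists>zs. journey p E t zs \<and> hd zs = u \<and> last zs = v)"

type_synonym 'v arena = "((nat \<times> 'v) \<times> (nat \<times> 'v)) set"

definition is_arena :: "'v set \<Rightarrow> nat \<Rightarrow> 'v arena \<Rightarrow> bool" where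
  "is_arena V p A \<longleftrightarrow>
     (\<forall>e\<in>A. \<exists>i w w'. i < p \<and> w \<in> V \<and> w' \<in> V \<and> e = ((i, w), ((i + 1) mod p, w')))"

definition arena_of :: "nat \<Rightarrow> (nat \<Rightarrow> ('v \<times> 'v) set) \<Rightarrow> 'v arena" where
  "arena_of p E = {((i, u), ((i + 1) mod p, v)) | i u v. i < p \<and> (u, v) \<in> E i}"

definition Gamma :: "nat \<Rightarrow> 'v arena \<Rightarrow> nat \<Rightarrow> 'v \<Rightarrow> 'v set" where
  "Gamma p M t u = {v. ((t, u), ((t + 1) mod p, v)) \<in> M}"

text \<open>Copwin configurations (t, c, r): the cop (to move) can force capture in finitely many
  rounds. Since the game is finite-state and finitely branching, this is the least set
  closed under the one-round rule (the cop attractor).\<close>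

inductive copwin :: "nat \<Rightarrow> (nat \<Rightarrow> ('v \<times> 'v) set) \<Rightarrow> nat \<Rightarrow> 'v \<Rightarrow> 'v \<Rightarrow> bool"
  for p E where
  step: "\<lbrakk> c' \<in> Gamma p (arena_of p E) t c;
          c' = r \<or> (\<forall>r' \<in> Gamma p (arena_of p E) t r. copwin p E ((t + 1) mod p) c' r') \<rbrakk>
         \<Longrightarrow> copwin p E t c r"

definition augmented_arena :: "'v set \<Rightarrow> nat \<Rightarrow> (nat \<Rightarrow> ('v \<times> 'v) set) \<Rightarrow> 'v arena \<Rightarrow> bool" where
  "augmented_arena V p E A \<longleftrightarrow> is_arena V p A \<and> arena_of p E \<subseteq> A \<and>
     (\<forall>t x t' y. ((t, x), (t', y)) \<in> A \<longrightarrow> copwin p E t x y)"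

definition max_augmented_arena :: "'v set \<Rightarrow> nat \<Rightarrow> (nat \<Rightarrow> ('v \<times> 'v) set) \<Rightarrow> 'v arena" where
  "max_augmented_arena V p E = \<Union> {A. augmented_arena V p E A}"

definition is_star :: "'v set \<Rightarrow> nat \<Rightarrow> 'v arena \<Rightarrow> nat \<Rightarrow> 'v \<Rightarrow> bool" where
  "is_star V p A t u \<longleftrightarrow> Gamma p A t u = V"

definition anchored :: "'v set \<Rightarrow> nat \<Rightarrow> (nat \<Rightarrow> ('v \<times> 'v) set) \<Rightarrow> nat \<Rightarrow> 'v \<Rightarrow> bool" where
  "anchored V p E t u \<longleftrightarrow> (\<exists>v\<in>V. ((0, v), (t, u)) \<in> (arena_of p E)\<^sup>*)"

end

theory Submission
  imports Defs
begin

(* A star (t0, u0) of an augmented arena is a temporal node from which the cop beats every robber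
   position. Such a node can be reached from every temporal node by a walk in the arena: follow a
   journey to u0, then wait at u0 (reflexivity) until time t0. Winning for every robber position
   propagates backwards along arena edges, since after the cop's move the robber is still somewhere
   in V. Hence every configuration is copwin, so the complete arena is augmented and A* is complete.
   Anchoring is waiting at u from time 0. *)

definition cop_wins_from :: "'v set \<Rightarrow> nat \<Rightarrow> (nat \<Rightarrow> ('v \<times> 'v) set) \<Rightarrow> nat \<Rightarrow> 'v \<Rightarrow> bool" where
  "cop_wins_from V p E t c \<longleftrightarrow> (\<forall>r\<in>V. copwin p E t c r)"

definition complete_arena :: "'v set \<Rightarrow> nat \<Rightarrow> 'v arena" where
  "complete_arena V p = {((t, u), ((t + 1) mod p, v)) | t u v. t < p \<and> u \<in> V \<and> v \<in> V}"

lemma arena_ofI: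
  "i < p \<Longrightarrow> (u, v) \<in> E i \<Longrightarrow> ((i, u), ((i + 1) mod p, v)) \<in> arena_of p E"
  by (auto simp: arena_of_def)

lemma journey_tl:
  assumes "journey p E t (a # b # zs)"
  shows "journey p E (Suc t) (b # zs)"
  unfolding journey_def
proof (intro conjI allI impI)
  fix j assume j: "Suc j < length (b # zs)"
  have steps: "\<forall>j. Suc j < length (a # b # zs) \<longrightarrow>
      ((a # b # zs) ! j, (a # b # zs) ! Suc j) \<in> E ((t + j) mod p)"
    using assms unfolding journey_def by (rule conjunct2)
  from steps[rule_format, of "Suc j"] j
  show "((b # zs) ! j, (b # zs) ! Suc j) \<in> E ((Suc t + j) mod p)" by simp
qed simp

lemma journey_imp_arena_walk:
  assumes "p \<ge> 1" "journey p E t zs"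
  shows "((t mod p, hd zs), ((t + length zs - 1) mod p, last zs)) \<in> (arena_of p E)\<^sup>*"
  using assms(2)
proof (induction zs arbitrary: t)
  case Nil
  then show ?case by (simp add: journey_def)
next
  case (Cons a zs)
  show ?case
  proof (cases zs)
    case Nil
    then show ?thesis by simp
  next
    case (Cons b zs')
    have "(a, b) \<in> E (t mod p)"
      using Cons.prems unfolding journey_def by (auto simp: Cons)
    then have edge: "((t mod p, a), (Suc t mod p, b)) \<in> arena_of p E"
      using arena_ofI[of "t mod p" p a b E] assms(1) by (simp add: mod_Suc_eq)
    have "journey p E (Suc t) zs"
      using journey_tl[of p E t a b zs'] Cons.prems by (simp add: Cons)
    from Cons.IH[OF this]
    have "((Suc t mod p, b), ((Suc t + length zs - 1) mod p, last zs)) \<in> (arena_of p E)\<^sup>*"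
      by (simp add: Cons)
    with edge show ?thesis
      using Cons by (auto intro: converse_rtrancl_into_rtrancl)
  qed
qed

lemma reflexive_wait_walk:
  assumes "p \<ge> 1" "reflexive_pg V p E" "u \<in> V" "s < p"
  shows "((s, u), ((s + m) mod p, u)) \<in> (arena_of p E)\<^sup>*"
proof (induction m)
  case 0
  then show ?case using assms by simp
next
  case (Suc m)
  have "(u, u) \<in> E ((s + m) mod p)"
    using assms(1-3) unfolding reflexive_pg_def by simp
  then have "(((s + m) mod p, u), ((s + Suc m) mod p, u)) \<in> arena_of p E"
    using arena_ofI[of "(s + m) mod p" p] assms(1) by (simp add: mod_Suc_eq)
  with Suc show ?case by (rule rtrancl_into_rtrancl)
qed

lemma reflexive_walk_between_times:
  assumes "p \<ge> 1" "reflexive_pg V p E" "u \<in> V" "s < p" "s' < p"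
  shows "((s, u), (s', u)) \<in> (arena_of p E)\<^sup>*"
proof -
  have "(s + (s' + p - s)) mod p = s'" using assms by simp
  then show ?thesis using reflexive_wait_walk[OF assms(1-4), of "s' + p - s"] by simp
qed

lemma temporally_connected_arena_walk:
  assumes "periodic_graph V p E" "reflexive_pg V p E" "temporally_connected V p E"
    and "t < p" "c \<in> V" "s < p" "u \<in> V"
  shows "((t, c), (s, u)) \<in> (arena_of p E)\<^sup>*"
proof -
  have p1: "p \<ge> 1" using assms(1) unfolding periodic_graph_def by simp
  obtain zs where zs: "journey p E t zs" "hd zs = c" "last zs = u"
    using assms(3,5,7) unfolding temporally_connected_def by meson
  have "((t, c), ((t + length zs - 1) mod p, u)) \<in> (arena_of p E)\<^sup>*"
    using journey_imp_arena_walk[OF p1 zs(1)] zs assms(4) by simp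
  also have "(((t + length zs - 1) mod p, u), (s, u)) \<in> (arena_of p E)\<^sup>*"
    using reflexive_walk_between_times[OF p1 assms(2,7) _ assms(6)] p1 by simp
  finally show ?thesis .
qed

lemma star_imp_cop_wins_from:
  assumes "augmented_arena V p E A" "is_star V p A t u"
  shows "cop_wins_from V p E t u"
  using assms unfolding cop_wins_from_def augmented_arena_def is_star_def Gamma_def by blast

lemma cop_wins_from_arena_edge:
  assumes "periodic_graph V p E"
    and "((t, c), (t', c')) \<in> arena_of p E"
    and "cop_wins_from V p E t' c'"
  shows "cop_wins_from V p E t c"
  unfolding cop_wins_from_def
proof
  fix r assume "r \<in> V"
  from assms(2) have tp: "t < p" and t': "t' = (t + 1) mod p"
    and cop_move: "c' \<in> Gamma p (arena_of p E) t c"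
    by (auto simp: arena_of_def Gamma_def)
  have "copwin p E t' c' r'" if "r' \<in> Gamma p (arena_of p E) t r" for r'
  proof -
    from that have "(r, r') \<in> E t" by (auto simp: Gamma_def arena_of_def)
    then have "r' \<in> V" using assms(1) tp unfolding periodic_graph_def by blast
    then show ?thesis using assms(3) unfolding cop_wins_from_def by blast
  qed
  then show "copwin p E t c r" using cop_move t' by (intro copwin.step) auto
qed

lemma cop_wins_from_arena_walk:
  assumes "periodic_graph V p E"
    and "((t, c), (t', c')) \<in> (arena_of p E)\<^sup>*"
    and "cop_wins_from V p E t' c'"
  shows "cop_wins_from V p E t c"
  using assms(2)
proof (induction "(t, c)" arbitrary: t c rule: converse_rtrancl_induct)
  case base
  then show ?case using assms(3) by simp
next
  case (step z t c)
  then show ?case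
    using cop_wins_from_arena_edge[OF assms(1)] by (cases z) blast
qed

lemma augmented_complete_arena:
  assumes "periodic_graph V p E"
    and "\<And>t c. t < p \<Longrightarrow> c \<in> V \<Longrightarrow> cop_wins_from V p E t c"
  shows "augmented_arena V p E (complete_arena V p)"
  unfolding augmented_arena_def
proof (intro conjI allI impI)
  show "is_arena V p (complete_arena V p)"
    unfolding is_arena_def complete_arena_def by blast
  show "arena_of p E \<subseteq> complete_arena V p"
    using assms(1) unfolding arena_of_def complete_arena_def periodic_graph_def by blast
  fix t x t' y assume "((t, x), (t', y)) \<in> complete_arena V p"
  then show "copwin p E t x y"
    using assms(2) unfolding complete_arena_def cop_wins_from_def by blast
qed

lemma is_star_max_augmented_arena:
  assumes "augmented_arena V p E (complete_arena V p)" "t < p" "u \<in> V"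
  shows "is_star V p (max_augmented_arena V p E) t u"
  unfolding is_star_def
proof (intro equalityI subsetI)
  fix v assume "v \<in> Gamma p (max_augmented_arena V p E) t u"
  then obtain B where "augmented_arena V p E B" "((t, u), ((t + 1) mod p, v)) \<in> B"
    by (auto simp: max_augmented_arena_def Gamma_def)
  then show "v \<in> V" unfolding augmented_arena_def is_arena_def by blast
next
  fix v assume "v \<in> V"
  then have "((t, u), ((t + 1) mod p, v)) \<in> complete_arena V p"
    using assms(2,3) unfolding complete_arena_def by blast
  then show "v \<in> Gamma p (max_augmented_arena V p E) t u"
    using assms(1) by (auto simp: max_augmented_arena_def Gamma_def)
qed

lemma reflexive_anchored:
  assumes "periodic_graph V p E" "reflexive_pg V p E" "t < p" "u \<in> V"
  shows "anchored V p E t u"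
proof -
  have "p \<ge> 1" using assms(1) unfolding periodic_graph_def by simp
  then show ?thesis
    unfolding anchored_def using reflexive_walk_between_times[OF _ assms(2,4) _ assms(3)] assms(4)
    by auto
qed

theorem mainTheorem8:
  fixes V :: "'v set" and p :: nat and E :: "nat \<Rightarrow> ('v \<times> 'v) set" and A :: "'v arena"
  assumes "periodic_graph V p E"
    and "reflexive_pg V p E"
    and "temporally_connected V p E"
    and "augmented_arena V p E A"
    and "\<exists>t<p. \<exists>u\<in>V. is_star V p A t u"
  shows "\<forall>t<p. \<forall>u\<in>V. is_star V p (max_augmented_arena V p E) t u \<and> anchored V p E t u"
proof -
  obtain t0 u0 where t0: "t0 < p" and u0: "u0 \<in> V" and star: "is_star V p A t0 u0"
    using assms(5) by blast
  have "cop_wins_from V p E t c" if "t < p" "c \<in> V" for t c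
    using cop_wins_from_arena_walk[OF assms(1)
        temporally_connected_arena_walk[OF assms(1-3) that t0 u0]
        star_imp_cop_wins_from[OF assms(4) star]] .
  then have complete: "augmented_arena V p E (complete_arena V p)"
    by (rule augmented_complete_arena[OF assms(1)])
  show ?thesis
    using is_star_max_augmented_arena[OF complete] reflexive_anchored[OF assms(1,2)] by blast
qed

end
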